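(* Let $q$ be a prime integer different from $p$. Then: (1) for every $0\le k\le r$, $S^k(q)=(q)=qR_k$; hence $\mathcal S^k(q)=[(q),(q),\dots,(q)]$; (2) for every $1\le\ell\le r$ and $0\le k\le\ell$, $L^{\ell-k}S^k(q)=J_{\ell,k}(q)\subseteq R_\ell$; (3) for every $1\le\ell\le r$ and $0\le k\le\ell-2$, $S\,L^{\ell-k-1}S^k(q)=L^{\ell-k}S^k(q)$. Here the iterated operators start from the ideal $(q)=q\mathbb{Z}\subseteq R_0$.
   Context: Fix a prime $p$ and an integer $r\ge0$. For $0\le k\le r$ let $R_k$ be the commutative ring which is free as a $\mathbb{Z}$-module with basis $X_{k,0},\dots,X_{k,k}$ and multiplication $X_{k,i}X_{k,j}=p^{k-\max(i,j)}X_{k,\min(i,j)}$; thus $X_{k,k}=1$, and an integer $n$ is identified with $nX_{k,k}$. For $0\le k\le\ell\le r$ define: the additive map $\mathrm{ind}^\ell_k:R_k\to R_\ell$, $X_{k,i}\mapsto X_{\ell,i}$; the ring homomorphism $\mathrm{res}^\ell_k:R_\ell\to R_k$, $\mathrm{res}^\ell_k(X_{\ell,i})=p^{\ell-k}X_{k,i}$ if $i\le k$ and $=p^{\ell-i}$ if $i\ge k$; and the multiplicative map $\mathrm{jnd}^\ell_k:R_k\to R_\ell$, $$\mathrm{jnd}^\ell_k\Big(\sum_{i=0}^k m_iX_{k,i}\Big)=m_kX_{\ell,\ell}+\sum_{k\le i<\ell}\frac{m_k^{p^{\ell-i}}-m_k^{p^{\ell-i-1}}}{p^{\ell-i}}X_{\ell,i}+\sum_{0\le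 i<k}\frac{(\sum_{s=i}^k m_sp^{k-s})^{p^{\ell-k}}-(\sum_{s=i+1}^k m_sp^{k-s})^{p^{\ell-k}}}{p^{\ell-i}}X_{\ell,i}$$ ($m_i\in\mathbb{Z}$). For $1\le k\le r$ and an ideal $I\subseteq R_{k-1}$: $L(I)=(\mathrm{res}^k_{k-1})^{-1}(I)\subseteq R_k$, and $S(I)$ is the ideal of $R_k$ generated by $\mathrm{ind}^k_{k-1}(I)\cup\mathrm{jnd}^k_{k-1}(I)$; $L^n,S^n$ denote iterates (each step raising the index by one). For an ideal $\mathscr I=[I_0,\dots,I_{k-1}]$ (sequence of ideals $I_j\subseteq R_j$), $\mathcal S\mathscr I=[I_0,\dots,I_{k-1},S(I_{k-1})]$; $(q)$ also denotes $[q\mathbb{Z}]$. For $0\le i\le\ell$, $F_{\ell,i}=X_{\ell,i}-p^{\ell-i}$; for $0\le k\le\ell$ and $x\in\mathbb{Z}$, $J_{\ell,k}(x)\subseteq R_\ell$ is the ideal generated by $x,F_{\ell,k},\dots,F_{\ell,\ell-1}$ if $k\le\ell-1$, and $J_{\ell,\ell}(x)=xR_\ell$. *)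

theory Defs
  imports "HOL-Computational_Algebra.Primes"
begin

text \<open>Elements of R_k are coefficient functions m :: nat => int with m i the
coefficient of X_{k,i}; they vanish for i > k.\<close>

definition carrierR :: "nat \<Rightarrow> (nat \<Rightarrow> int) set" where
  "carrierR k = {m. \<forall>i>k. m i = 0}"

definition addR :: "(nat \<Rightarrow> int) \<Rightarrow> (nat \<Rightarrow> int) \<Rightarrow> (nat \<Rightarrow> int)" where
  "addR x y = (\<lambda>i. x i + y i)"

text \<open>X_{k,i} X_{k,j} = p^(k - max i j) X_{k, min i j}\<close>
definition mulR :: "int \<Rightarrow> nat \<Rightarrow> (nat \<Rightarrow> int) \<Rightarrow> (nat \<Rightarrow> int) \<Rightarrow> (nat \<Rightarrow> int)" where
  "mulR p k x y = (\<lambda>t. if t \<le> k then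
      (\<Sum>i\<le>k. \<Sum>j\<le>k. if min i j = t then x i * y j * p ^ (k - max i j) else 0) else 0)"

text \<open>the integer n identified with n X_{k,k}\<close>
definition constR :: "nat \<Rightarrow> int \<Rightarrow> (nat \<Rightarrow> int)" where
  "constR k n = (\<lambda>i. if i = k then n else 0)"

definition is_idealR :: "int \<Rightarrow> nat \<Rightarrow> (nat \<Rightarrow> int) set \<Rightarrow> bool" where
  "is_idealR p k I \<longleftrightarrow> I \<subseteq> carrierR k \<and> (\<lambda>_. 0) \<in> I
     \<and> (\<forall>x\<in>I. \<forall>y\<in>I. addR x y \<in> I)
     \<and> (\<forall>a\<in>carrierR k. \<forall>x\<in>I. mulR p k a x \<in> I)"

definition ideal_gen :: "int \<Rightarrow> nat \<Rightarrow> (nat \<Rightarrow> int) set \<Rightarrow> (nat \<Rightarrow> int) set" where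
  "ideal_gen p k G = \<Inter>{I. is_idealR p k I \<and> G \<subseteq> I}"

definition indR :: "nat \<Rightarrow> nat \<Rightarrow> (nat \<Rightarrow> int) \<Rightarrow> (nat \<Rightarrow> int)" where
  "indR l k x = (\<lambda>i. if i \<le> k then x i else 0)"

text \<open>res^l_k, the additive extension of X_{l,i} |-> p^(l-k) X_{k,i} (i \<le> k),
  p^(l-i) (i \<ge> k)\<close>
definition resR :: "int \<Rightarrow> nat \<Rightarrow> nat \<Rightarrow> (nat \<Rightarrow> int) \<Rightarrow> (nat \<Rightarrow> int)" where
  "resR p l k x = (\<lambda>j. if j < k then p ^ (l - k) * x j
      else if j = k then (\<Sum>i\<in>{k..l}. p ^ (l - i) * x i) else 0)"

text \<open>jnd^l_k (the divisions are exact)\<close>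
definition jndR :: "int \<Rightarrow> nat \<Rightarrow> nat \<Rightarrow> (nat \<Rightarrow> int) \<Rightarrow> (nat \<Rightarrow> int)" where
  "jndR p l k m = (\<lambda>i.
     if i = l then m k
     else if k \<le> i \<and> i < l then (m k ^ (nat p ^ (l - i)) - m k ^ (nat p ^ (l - i - 1))) div p ^ (l - i)
     else if i < k then
       ((\<Sum>s\<in>{i..k}. m s * p ^ (k - s)) ^ (nat p ^ (l - k))
        - (\<Sum>s\<in>{i+1..k}. m s * p ^ (k - s)) ^ (nat p ^ (l - k))) div p ^ (l - i)
     else 0)"

text \<open>For 1 \<le> k and an ideal I of R_{k-1}: L(I), S(I) ideals of R_k.\<close>
definition Lop :: "int \<Rightarrow> nat \<Rightarrow> (nat \<Rightarrow> int) set \<Rightarrow> (nat \<Rightarrow> int) set" where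
  "Lop p k I = {x \<in> carrierR k. resR p k (k - 1) x \<in> I}"

definition Sop :: "int \<Rightarrow> nat \<Rightarrow> (nat \<Rightarrow> int) set \<Rightarrow> (nat \<Rightarrow> int) set" where
  "Sop p k I = ideal_gen p k (indR k (k - 1) ` I \<union> jndR p k (k - 1) ` I)"

definition qZ :: "int \<Rightarrow> (nat \<Rightarrow> int) set" where
  "qZ q = {constR 0 (q * a) | a. True}"

fun Sit :: "int \<Rightarrow> int \<Rightarrow> nat \<Rightarrow> (nat \<Rightarrow> int) set" where
  "Sit p q 0 = qZ q"
| "Sit p q (Suc k) = Sop p (Suc k) (Sit p q k)"

fun Lit :: "int \<Rightarrow> nat \<Rightarrow> nat \<Rightarrow> (nat \<Rightarrow> int) set \<Rightarrow> (nat \<Rightarrow> int) set" where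
  "Lit p k 0 I = I"
| "Lit p k (Suc n) I = Lop p (k + Suc n) (Lit p k n I)"

definition F :: "int \<Rightarrow> nat \<Rightarrow> nat \<Rightarrow> (nat \<Rightarrow> int)" where
  "F p l i = (\<lambda>j. (if j = i then 1 else 0) - (if j = l then p ^ (l - i) else 0))"

definition J :: "int \<Rightarrow> nat \<Rightarrow> nat \<Rightarrow> int \<Rightarrow> (nat \<Rightarrow> int) set" where
  "J p l k x = ideal_gen p l ({constR l x} \<union> {F p l i | i. k \<le> i \<and> i < l})"

end

theory Submission
  imports Defs "HOL-Number_Theory.Number_Theory"
begin

text \<open>For j \<le> l the map mark p l j, sending X_{l,i} to p^(l-i) if j \<le> i and to 0 otherwise,
  is a ring homomorphism R_l \<rightarrow> \<int>. Since q is prime to p, J_{l,k}(q) consists exactly of the y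
  with q dividing mark p l j y for all j \<le> k. On marks, res acts as the identity, ind as
  multiplication by p and jnd as the p-th power; the divisions in jnd are exact by Fermat's little
  theorem and because a \<equiv> b mod p^e implies a^p \<equiv> b^p mod p^(e+1). Hence L maps J_{l,k}(q) onto
  J_{l+1,k}(q), and S maps it into J_{l+1,k}(q), or into J_{l+1,l+1}(q) if k = l. Equality for S
  comes from writing q and the F_{l+1,i} as explicit combinations of ind and jnd of generators of
  J_{l,k}(q). Starting from (q) = J_{0,0}(q), this identifies every ideal in the statement.\<close>

section \<open>Congruences modulo powers of p\<close>

lemma prime_dvd_pow_self_diff:
  fixes p a :: int
  assumes "prime p"
  shows "p dvd a ^ nat p - a"
proof (cases "p dvd a")
  case True
  have "a dvd a ^ nat p" using prime_gt_1_int[OF assms] by (simp add: dvd_power)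
  with True show ?thesis by (meson dvd_diff dvd_trans)
next
  case False
  interpret residues p "residue_ring p"
    using prime_gt_1_int[OF assms] by unfold_locales simp_all
  have "coprime a p" using False assms by (metis coprime_commute prime_imp_coprime)
  then have "[a ^ totient (nat p) = 1] (mod p)" by (rule euler_theorem)
  moreover have "totient (nat p) = nat p - 1"
    using assms by (simp add: totient_prime prime_nat_iff_prime)
  ultimately have "[a ^ (nat p - 1) * a = 1 * a] (mod p)" by (metis cong_scalar_right)
  moreover have "a ^ (nat p - 1) * a = a ^ nat p"
    using prime_gt_1_int[OF assms] by (simp flip: power_Suc2)
  ultimately show ?thesis by (simp add: cong_iff_dvd_diff)
qed

lemma prime_power_Suc_dvd_pow_diff:
  fixes p a b :: int
  assumes "prime p" "1 \<le> e" "p ^ e dvd a - b"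
  shows "p ^ Suc e dvd a ^ nat p - b ^ nat p"
proof -
  define P where "P = nat p"
  have p_eq: "p = int P" using assms P_def prime_gt_0_int[of p] by auto
  have "p dvd p ^ e" using assms(2) by (simp add: dvd_power)
  then have ab: "[a = b] (mod p)" using assms(3) dvd_trans cong_iff_dvd_diff by blast
  have "[(\<Sum>i<P. b ^ (P - Suc i) * a ^ i) = (\<Sum>i<P. b ^ (P - Suc i) * b ^ i)] (mod p)"
    by (intro cong_sum cong_mult cong_pow ab cong_refl)
  moreover have "(\<Sum>i<P. b ^ (P - Suc i) * b ^ i) = p * b ^ (P - 1)"
    using p_eq by (simp flip: power_add)
  ultimately have "p dvd (\<Sum>i<P. b ^ (P - Suc i) * a ^ i)"
    by (metis cong_dvd_iff dvd_triv_left)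
  then have "p ^ e * p dvd (a - b) * (\<Sum>i<P. b ^ (P - Suc i) * a ^ i)"
    using assms(3) by (rule mult_dvd_mono[rotated])
  then show ?thesis unfolding P_def by (simp add: power_diff_sumr2 mult.commute)
qed

section \<open>Ideals of R_k\<close>

lemma is_idealR_carrierR: "is_idealR p k (carrierR k)"
  unfolding is_idealR_def carrierR_def addR_def mulR_def by auto

lemma ideal_gen_least: "is_idealR p k I \<Longrightarrow> G \<subseteq> I \<Longrightarrow> ideal_gen p k G \<subseteq> I"
  unfolding ideal_gen_def by auto

lemma ideal_gen_superset: "G \<subseteq> ideal_gen p k G"
  unfolding ideal_gen_def by auto

lemma is_idealR_ideal_gen:
  assumes "G \<subseteq> carrierR k"
  shows "is_idealR p k (ideal_gen p k G)"
proof -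
  have "carrierR k \<in> {I. is_idealR p k I \<and> G \<subseteq> I}"
    using assms is_idealR_carrierR by auto
  then show ?thesis
    unfolding is_idealR_def ideal_gen_def by (auto simp: is_idealR_def)
qed

lemma is_idealR_addR: "is_idealR p k I \<Longrightarrow> x \<in> I \<Longrightarrow> y \<in> I \<Longrightarrow> addR x y \<in> I"
  unfolding is_idealR_def by blast

lemma is_idealR_sum:
  assumes "is_idealR p k I" "finite A" "\<And>i. i \<in> A \<Longrightarrow> f i \<in> I"
  shows "(\<lambda>t. \<Sum>i\<in>A. f i t) \<in> I"
  using assms(2,3)
proof (induction A rule: finite_induct)
  case empty
  then show ?case using assms(1) by (simp add: is_idealR_def)
next
  case (insert x A)
  then have "addR (f x) (\<lambda>t. \<Sum>i\<in>A. f i t) \<in> I"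
    by (intro is_idealR_addR[OF assms(1)]) auto
  then show ?case using insert by (simp add: addR_def)
qed

lemma constR_carrierR: "constR k c \<in> carrierR k"
  unfolding constR_def carrierR_def by auto

lemma mulR_constR_right:
  assumes "a \<in> carrierR k"
  shows "mulR p k a (constR k c) = (\<lambda>t. a t * c)"
proof
  fix t
  have "(\<Sum>j\<le>k. if min i j = t then a i * constR k c j * p ^ (k - max i j) else 0)
      = (if i = t then a i * c else 0)" if "i \<le> k" for i
  proof -
    have "(\<Sum>j\<le>k. if min i j = t then a i * constR k c j * p ^ (k - max i j) else 0)
        = (\<Sum>j\<le>k. if j = k then (if i = t then a i * c else 0) else 0)"
      using that by (intro sum.cong refl) (auto simp: constR_def min_def max_def)
    then show ?thesis by simp
  qed
  then show "mulR p k a (constR k c) t = a t * c"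
    using assms by (auto simp: mulR_def carrierR_def)
qed

lemma mulR_constR_left:
  assumes "a \<in> carrierR k"
  shows "mulR p k (constR k c) a = (\<lambda>t. c * a t)"
proof
  fix t
  have "(\<Sum>j\<le>k. if min i j = t then constR k c i * a j * p ^ (k - max i j) else 0)
      = (if i = k \<and> t \<le> k then c * a t else 0)" if "i \<le> k" for i
  proof (cases "i = k")
    case True
    then have "(\<Sum>j\<le>k. if min i j = t then constR k c i * a j * p ^ (k - max i j) else 0)
        = (\<Sum>j\<le>k. if j = t then c * a t else 0)"
      by (intro sum.cong refl) (auto simp: constR_def min_def max_def)
    then show ?thesis using True by simp
  qed (auto simp: constR_def intro!: sum.neutral)
  then show "mulR p k (constR k c) a t = c * a t"
    using assms by (auto simp: mulR_def carrierR_def)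
qed

lemma is_idealR_smult:
  assumes "is_idealR p k I" "x \<in> I"
  shows "(\<lambda>t. c * x t) \<in> I"
proof -
  have "x \<in> carrierR k" using assms by (auto simp: is_idealR_def)
  then have "(\<lambda>t. c * x t) = mulR p k (constR k c) x" by (simp add: mulR_constR_left)
  also have "\<dots> \<in> I" using assms constR_carrierR by (auto simp: is_idealR_def)
  finally show ?thesis .
qed

lemma is_idealR_multiple_of_constR:
  assumes "is_idealR p k I" "constR k c \<in> I" "y \<in> carrierR k" "\<And>t. c dvd y t"
  shows "y \<in> I"
proof -
  define w where "w t = y t div c" for t
  have w: "w \<in> carrierR k" using assms(3) by (simp add: w_def carrierR_def)
  have "y = mulR p k w (constR k c)"
    using assms(4) by (simp add: mulR_constR_right[OF w] w_def)
  also have "\<dots> \<in> I" using assms(1,2) w by (simp add: is_idealR_def)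
  finally show ?thesis .
qed

section \<open>Marks and the ideals J_{l,k}(q)\<close>

definition mark :: "int \<Rightarrow> nat \<Rightarrow> nat \<Rightarrow> (nat \<Rightarrow> int) \<Rightarrow> int" where
  "mark p l j y = (\<Sum>s\<in>{j..l}. y s * p ^ (l - s))"

lemma mark_eq_sum_atMost: "mark p l j y = (\<Sum>i\<le>l. if j \<le> i then y i * p ^ (l - i) else 0)"
proof -
  have "{j..l} = {i\<in>{..l}. j \<le> i}" by auto
  then show ?thesis unfolding mark_def by (simp only:) (rule sum.inter_filter, simp)
qed

lemma mark_mulR:
  assumes "j \<le> l"
  shows "mark p l j (mulR p l a x) = mark p l j a * mark p l j x"
proof -
  have if_times: "(if P then A else 0) * B = (if P then A * B else 0)" for P and A B :: int
    by simp
  let ?term = "\<lambda>i i' t. if min i i' = t then a i * x i' * p ^ (l - max i i') * p ^ (l - t) else 0"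
  have "mark p l j (mulR p l a x) = (\<Sum>t\<in>{j..l}. \<Sum>i\<le>l. \<Sum>i'\<le>l. ?term i i' t)"
    unfolding mark_def mulR_def
    by (intro sum.cong refl) (auto simp: sum_distrib_right if_times)
  also have "\<dots> = (\<Sum>i\<le>l. \<Sum>i'\<le>l. \<Sum>t\<in>{j..l}. ?term i i' t)"
    by (subst sum.swap) (simp add: sum.swap[of _ "{j..l}"])
  also have "\<dots> = (\<Sum>i\<le>l. \<Sum>i'\<le>l.
      (if j \<le> i then a i * p ^ (l - i) else 0) * (if j \<le> i' then x i' * p ^ (l - i') else 0))"
  proof (intro sum.cong refl)
    fix i i' assume "i \<in> {..l}" "i' \<in> {..l}"
    then have "(\<Sum>t\<in>{j..l}. ?term i i' t)
        = (if j \<le> min i i' then a i * x i' * p ^ (l - max i i') * p ^ (l - min i i') else 0)"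
      by (subst sum.delta') auto
    also have "\<dots> = (if j \<le> i then a i * p ^ (l - i) else 0) * (if j \<le> i' then x i' * p ^ (l - i') else 0)"
      by (auto simp: min_def max_def)
    finally show "(\<Sum>t\<in>{j..l}. ?term i i' t) = \<dots>" .
  qed
  also have "\<dots> = mark p l j a * mark p l j x"
    unfolding mark_eq_sum_atMost by (simp add: sum_product)
  finally show ?thesis .
qed

lemma mark_addR: "mark p l j (addR a b) = mark p l j a + mark p l j b"
  unfolding mark_def addR_def by (simp add: sum.distrib distrib_right)

lemma mark_zero: "mark p l j (\<lambda>_. 0) = 0"
  unfolding mark_def by simp

lemma mark_constR:
  assumes "j \<le> l"
  shows "mark p l j (constR l c) = c"
proof -
  have "mark p l j (constR l c) = (\<Sum>s\<in>{j..l}. if s = l then c else 0)"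
    unfolding mark_def constR_def by (intro sum.cong refl) auto
  then show ?thesis using assms by simp
qed

lemma mark_F:
  assumes "i < l" "j \<le> l"
  shows "mark p l j (F p l i) = (if j \<le> i then 0 else - (p ^ (l - i)))"
proof -
  have "mark p l j (F p l i)
      = (\<Sum>s\<in>{j..l}. (if s = i then p ^ (l - i) else 0) - (if s = l then p ^ (l - i) else 0))"
    unfolding mark_def F_def by (intro sum.cong refl) auto
  also have "\<dots> = (if i \<in> {j..l} then p ^ (l - i) else 0) - p ^ (l - i)"
    using assms by (simp add: sum_subtractf)
  finally show ?thesis using assms by auto
qed

lemma mark_Suc: "j \<le> l \<Longrightarrow> mark p l j y = y j * p ^ (l - j) + mark p l (Suc j) y"
  unfolding mark_def by (simp add: sum.atLeast_Suc_atMost)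

lemma mark_self: "mark p l l y = y l"
  unfolding mark_def by simp

definition mark_ideal :: "int \<Rightarrow> nat \<Rightarrow> nat \<Rightarrow> int \<Rightarrow> (nat \<Rightarrow> int) set" where
  "mark_ideal p l k q = {y \<in> carrierR l. \<forall>j\<le>k. q dvd mark p l j y}"

lemma is_idealR_mark_ideal:
  assumes "k \<le> l"
  shows "is_idealR p l (mark_ideal p l k q)"
  unfolding is_idealR_def
proof (intro conjI ballI)
  show "mark_ideal p l k q \<subseteq> carrierR l" by (auto simp: mark_ideal_def)
  show "(\<lambda>_. 0) \<in> mark_ideal p l k q"
    by (simp add: mark_ideal_def carrierR_def mark_zero)
  show "addR x y \<in> mark_ideal p l k q" if "x \<in> mark_ideal p l k q" "y \<in> mark_ideal p l k q" for x y
    using that by (auto simp: mark_ideal_def carrierR_def addR_def mark_addR[unfolded addR_def])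
  show "mulR p l a x \<in> mark_ideal p l k q" if "a \<in> carrierR l" "x \<in> mark_ideal p l k q" for a x
  proof -
    have "mulR p l a x \<in> carrierR l" by (simp add: mulR_def carrierR_def)
    then show ?thesis using that assms by (auto simp: mark_ideal_def mark_mulR)
  qed
qed

lemma F_carrierR: "i < l \<Longrightarrow> F p l i \<in> carrierR l"
  unfolding F_def carrierR_def by auto

lemma F_mem_mark_ideal: "k \<le> i \<Longrightarrow> i < l \<Longrightarrow> F p l i \<in> mark_ideal p l k q"
  by (auto simp: mark_ideal_def F_carrierR mark_F)

lemma constR_mem_mark_ideal: "k \<le> l \<Longrightarrow> constR l q \<in> mark_ideal p l k q"
  by (simp add: mark_ideal_def constR_carrierR mark_constR)

lemma mark_ideal_coeff_dvd:
  assumes "coprime q p" "y \<in> mark_ideal p l k q" "i < k" "k \<le> l"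
  shows "q dvd y i"
proof -
  have "y i * p ^ (l - i) = mark p l i y - mark p l (Suc i) y"
    using mark_Suc[of i l p y] assms(3,4) by simp
  also have "q dvd \<dots>" using assms(2,3) by (auto simp: mark_ideal_def)
  finally show ?thesis using assms(1) by (simp add: coprime_dvd_mult_left_iff)
qed

lemma carrierR_eq_addR_sum_F:
  assumes "y \<in> carrierR l" "k \<le> l"
  shows "y = addR (\<lambda>t. if t < k then y t else if t = l then mark p l k y else 0)
                 (\<lambda>t. \<Sum>i\<in>{k..<l}. y i * F p l i t)"
proof
  fix t
  have top: "mark p l k y = (\<Sum>i\<in>{k..<l}. y i * p ^ (l - i)) + y l"
  proof -
    have "{k..l} = insert l {k..<l}" using assms(2) by auto
    then show ?thesis unfolding mark_def by simp
  qed
  have "(\<Sum>i\<in>{k..<l}. y i * F p l i t) =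
     (\<Sum>i\<in>{k..<l}. (if t = i then y t else 0) - (if t = l then y i * p ^ (l - i) else 0))"
    by (intro sum.cong refl) (auto simp: F_def)
  also have "\<dots> = (if k \<le> t \<and> t < l then y t else 0)
      - (if t = l then \<Sum>i\<in>{k..<l}. y i * p ^ (l - i) else 0)"
    by (simp add: sum_subtractf)
  finally have sum_F: "(\<Sum>i\<in>{k..<l}. y i * F p l i t) = (if k \<le> t \<and> t < l then y t else 0)
      - (if t = l then \<Sum>i\<in>{k..<l}. y i * p ^ (l - i) else 0)" .
  consider "t < k" | "k \<le> t" "t < l" | "t = l" | "l < t" by linarith
  then have "y t = (if t < k then y t else if t = l then mark p l k y else 0)
      + ((if k \<le> t \<and> t < l then y t else 0) - (if t = l then \<Sum>i\<in>{k..<l}. y i * p ^ (l - i) else 0))"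
    using assms top by cases (auto simp: carrierR_def)
  then show "y t = addR (\<lambda>t. if t < k then y t else if t = l then mark p l k y else 0)
                 (\<lambda>t. \<Sum>i\<in>{k..<l}. y i * F p l i t) t"
    by (simp only: addR_def sum_F)
qed

lemma J_eq_mark_ideal:
  fixes p q :: int
  assumes "coprime q p" "k \<le> l"
  shows "J p l k q = mark_ideal p l k q"
proof
  let ?G = "{constR l q} \<union> {F p l i | i. k \<le> i \<and> i < l}"
  show "J p l k q \<subseteq> mark_ideal p l k q"
    unfolding J_def using assms(2)
    by (intro ideal_gen_least is_idealR_mark_ideal) (auto intro: F_mem_mark_ideal constR_mem_mark_ideal)
  have I: "is_idealR p l (J p l k q)"
    unfolding J_def by (rule is_idealR_ideal_gen) (auto intro: constR_carrierR F_carrierR)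
  have gens: "?G \<subseteq> J p l k q"
    unfolding J_def by (rule ideal_gen_superset)
  show "mark_ideal p l k q \<subseteq> J p l k q"
  proof
    fix y assume y: "y \<in> mark_ideal p l k q"
    then have y_carrier: "y \<in> carrierR l" by (simp add: mark_ideal_def)
    let ?g = "\<lambda>t. if t < k then y t else if t = l then mark p l k y else 0"
    have "?g \<in> J p l k q"
    proof (rule is_idealR_multiple_of_constR[OF I])
      show "constR l q \<in> J p l k q" using gens by blast
      show "?g \<in> carrierR l" using assms(2) by (simp add: carrierR_def)
      show "q dvd ?g t" for t
        using y mark_ideal_coeff_dvd[OF assms(1) y _ assms(2)] by (auto simp: mark_ideal_def)
    qed
    moreover have "(\<lambda>t. \<Sum>i\<in>{k..<l}. y i * F p l i t) \<in> J p l k q"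
      using gens by (intro is_idealR_sum[OF I] is_idealR_smult[OF I]) auto
    ultimately have "addR ?g (\<lambda>t. \<Sum>i\<in>{k..<l}. y i * F p l i t) \<in> J p l k q"
      by (rule is_idealR_addR[OF I])
    then show "y \<in> J p l k q"
      by (subst carrierR_eq_addR_sum_F[OF y_carrier assms(2)])
  qed
qed

lemma J_self: "J p l l c = ideal_gen p l {constR l c}"
proof -
  have no_F: "{F p l i | i. l \<le> i \<and> i < l} = {}" by auto
  show ?thesis unfolding J_def no_F by simp
qed

section \<open>res, ind and jnd on marks\<close>

lemma resR_carrierR: "resR p (Suc m) m x \<in> carrierR m"
  unfolding resR_def carrierR_def by auto

lemma mark_resR:
  assumes "j \<le> m"
  shows "mark p m j (resR p (Suc m) m x) = mark p (Suc m) j x"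
proof -
  have lower: "{j..m} = insert m {j..<m}" and upper: "{j..Suc m} = insert (Suc m) (insert m {j..<m})"
    using assms by auto
  have "{m..Suc m} = {m, Suc m}" by auto
  then have "mark p m j (resR p (Suc m) m x)
      = (\<Sum>s\<in>{j..<m}. p * x s * p ^ (m - s)) + (p * x m + x (Suc m))"
    unfolding mark_def lower by (simp add: resR_def add.commute)
  also have "(\<Sum>s\<in>{j..<m}. p * x s * p ^ (m - s)) = (\<Sum>s\<in>{j..<m}. x s * p ^ (Suc m - s))"
    by (intro sum.cong refl) (auto simp: Suc_diff_le power_Suc)
  finally show ?thesis unfolding mark_def upper by (simp add: algebra_simps)
qed

lemma Lop_mark_ideal: "k \<le> m \<Longrightarrow> Lop p (Suc m) (mark_ideal p m k q) = mark_ideal p (Suc m) k q"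
  by (auto simp: Lop_def mark_ideal_def resR_carrierR mark_resR)

lemma Lit_mark_ideal: "Lit p k n (mark_ideal p k k q) = mark_ideal p (k + n) k q"
  by (induction n) (simp_all add: Lop_mark_ideal)

lemma indR_carrierR: "indR (Suc m) m x \<in> carrierR (Suc m)"
  unfolding indR_def carrierR_def by auto

lemma mark_indR:
  assumes "j \<le> m"
  shows "mark p (Suc m) j (indR (Suc m) m x) = p * mark p m j x"
proof -
  have "{j..Suc m} = insert (Suc m) {j..m}" using assms by auto
  then have "mark p (Suc m) j (indR (Suc m) m x) = (\<Sum>s\<in>{j..m}. x s * p ^ (Suc m - s))"
    unfolding mark_def by (simp add: indR_def)
  also have "\<dots> = (\<Sum>s\<in>{j..m}. p * (x s * p ^ (m - s)))"
    by (intro sum.cong refl) (auto simp: Suc_diff_le power_Suc)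
  finally show ?thesis unfolding mark_def by (simp add: sum_distrib_left)
qed

lemma mark_indR_self: "mark p (Suc m) (Suc m) (indR (Suc m) m x) = 0"
  by (simp add: mark_self indR_def)

lemma jndR_carrierR: "jndR p (Suc m) m x \<in> carrierR (Suc m)"
  unfolding jndR_def carrierR_def by auto

lemma jndR_below:
  "t < m \<Longrightarrow> jndR p (Suc m) m x t
     = (mark p m t x ^ nat p - mark p m (Suc t) x ^ nat p) div p ^ (Suc m - t)"
  by (simp add: jndR_def mark_def)

lemma mark_jndR_self: "mark p (Suc m) (Suc m) (jndR p (Suc m) m x) = mark p m m x"
  by (simp add: mark_self jndR_def)

lemma mark_jndR:
  assumes p: "prime p" and "j \<le> m"
  shows "mark p (Suc m) j (jndR p (Suc m) m x) = mark p m j x ^ nat p"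
proof -
  define P where "P = nat p"
  define A where "A s = mark p m s x" for s
  define y where "y = jndR p (Suc m) m x"
  have y_m: "y m * p = x m ^ P - x m"
    using prime_dvd_pow_self_diff[OF p, of "x m"] by (simp add: y_def jndR_def P_def)
  have y_below: "y s * p ^ (Suc m - s) = A s ^ P - A (Suc s) ^ P" if "s < m" for s
  proof -
    have "A s = x s * p ^ (m - s) + A (Suc s)"
      unfolding A_def using that by (intro mark_Suc) simp
    then have "p ^ Suc (m - s) dvd A s ^ P - A (Suc s) ^ P"
      unfolding P_def using that by (intro prime_power_Suc_dvd_pow_diff[OF p]) auto
    then show ?thesis
      using that by (simp add: y_def jndR_below A_def P_def Suc_diff_le)
  qed
  have "{j..Suc m} = insert (Suc m) (insert m {j..<m})" using assms(2) by auto
  then have "mark p (Suc m) j y = (\<Sum>s\<in>{j..<m}. y s * p ^ (Suc m - s)) + (y m * p + y (Suc m))"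
    unfolding mark_def by (simp add: add.commute)
  also have "(\<Sum>s\<in>{j..<m}. y s * p ^ (Suc m - s)) = (\<Sum>s\<in>{j..<m}. A s ^ P - A (Suc s) ^ P)"
    by (intro sum.cong refl) (simp add: y_below)
  also have "\<dots> = A j ^ P - A m ^ P"
    using sum_Suc_diff'[OF assms(2), of "\<lambda>s. A s ^ P"] by (simp add: sum_subtractf)
  finally show ?thesis
    using y_m by (simp add: y_def jndR_def A_def P_def mark_self)
qed

lemma is_idealR_Sop: "is_idealR p (Suc m) (Sop p (Suc m) I)"
  unfolding Sop_def using indR_carrierR jndR_carrierR by (intro is_idealR_ideal_gen) auto

lemma indR_mem_Sop: "x \<in> I \<Longrightarrow> indR (Suc m) m x \<in> Sop p (Suc m) I"
  unfolding Sop_def using ideal_gen_superset by fastforce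

lemma jndR_mem_Sop: "x \<in> I \<Longrightarrow> jndR p (Suc m) m x \<in> Sop p (Suc m) I"
  unfolding Sop_def using ideal_gen_superset by fastforce

section \<open>The operators S and L on J_{l,k}(q)\<close>

lemma Sop_mark_ideal_subset:
  assumes p: "prime p" and "k \<le> m"
  shows "Sop p (Suc m) (mark_ideal p m k q) \<subseteq> mark_ideal p (Suc m) (if k = m then Suc m else k) q"
    \<comment> \<open>the top mark of jnd x is mark p m m x, which is divisible by q only when k = m\<close>
    (is "_ \<subseteq> mark_ideal p (Suc m) ?k' q")
  unfolding Sop_def
proof (rule ideal_gen_least[OF is_idealR_mark_ideal])
  show "?k' \<le> Suc m" using \<open>k \<le> m\<close> by simp
  have below: "j \<le> k" if "j \<le> ?k'" "j \<le> m" for j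
    using that by (auto split: if_splits)
  have above: "j = Suc m \<and> k = m" if "j \<le> ?k'" "\<not> j \<le> m" for j
    using that \<open>k \<le> m\<close> by (auto split: if_splits)
  have ind: "indR (Suc m) m x \<in> mark_ideal p (Suc m) ?k' q"
    and jnd: "jndR p (Suc m) m x \<in> mark_ideal p (Suc m) ?k' q"
    if x: "x \<in> mark_ideal p m k q" for x
  proof -
    have x_dvd: "q dvd mark p m j x" if "j \<le> k" for j
      using x that by (simp add: mark_ideal_def)
    have "q dvd mark p (Suc m) j (indR (Suc m) m x)" if "j \<le> ?k'" for j
    proof (cases "j \<le> m")
      case True
      then show ?thesis using x_dvd[OF below[OF that True]] by (simp add: mark_indR)
    qed (use above[OF that] in \<open>simp add: mark_indR_self\<close>)
    then show "indR (Suc m) m x \<in> mark_ideal p (Suc m) ?k' q"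
      by (simp add: mark_ideal_def indR_carrierR)
    have "q dvd mark p (Suc m) j (jndR p (Suc m) m x)" if "j \<le> ?k'" for j
    proof (cases "j \<le> m")
      case True
      have "mark p m j x dvd mark p m j x ^ nat p"
        using prime_gt_1_int[OF p] by (simp add: dvd_power)
      then show ?thesis
        using x_dvd[OF below[OF that True]] True by (simp add: mark_jndR[OF p] dvd_trans)
    qed (use above[OF that] x_dvd in \<open>simp add: mark_jndR_self\<close>)
    then show "jndR p (Suc m) m x \<in> mark_ideal p (Suc m) ?k' q"
      by (simp add: mark_ideal_def jndR_carrierR)
  qed
  show "indR (Suc m) (Suc m - 1) ` mark_ideal p m k q \<union> jndR p (Suc m) (Suc m - 1) ` mark_ideal p m k q
      \<subseteq> mark_ideal p (Suc m) ?k' q"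
    using ind jnd by auto
qed

lemma jndR_constR:
  "jndR p (Suc m) m (constR m c)
     = (\<lambda>t. if t = Suc m then c else if t = m then (c ^ nat p - c) div p else 0)"
proof
  fix t
  show "jndR p (Suc m) m (constR m c) t
      = (if t = Suc m then c else if t = m then (c ^ nat p - c) div p else 0)"
  proof (cases "t < m")
    case True
    then show ?thesis by (simp add: jndR_below mark_constR)
  qed (auto simp: jndR_def constR_def)
qed

lemma constR_mem_Sop:
  assumes p: "prime p" and "coprime c p" and "constR m c \<in> I"
  shows "constR (Suc m) c \<in> Sop p (Suc m) I"
proof -
  obtain e where e: "c ^ nat p - c = p * e"
    using prime_dvd_pow_self_diff[OF p] by blast
  have "c dvd c ^ nat p - c"
    using prime_gt_1_int[OF p] by (simp add: dvd_power)
  then have "c dvd e"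
    using \<open>coprime c p\<close> e by (simp add: coprime_dvd_mult_right_iff)
  then obtain d where d: "(c ^ nat p - c) div p = c * d"
    using e p by (auto simp: dvd_def)
  have "constR (Suc m) c
      = addR (jndR p (Suc m) m (constR m c)) (\<lambda>t. (- d) * indR (Suc m) m (constR m c) t)"
    unfolding addR_def jndR_constR by (auto simp: indR_def constR_def d)
  also have "\<dots> \<in> Sop p (Suc m) I"
    using assms(3) by (intro is_idealR_addR[OF is_idealR_Sop] is_idealR_smult[OF is_idealR_Sop]
        jndR_mem_Sop indR_mem_Sop)
  finally show ?thesis .
qed

lemma jndR_F_pred:
  assumes p: "prime p" and "1 \<le> m"
  defines "d \<equiv> (- p) ^ nat p div p ^ 2"
  shows "jndR p (Suc m) m (F p m (m - 1))
    = (\<lambda>t. if t = Suc m then - p else if t = m then d * p + 1 else if Suc t = m then - d else 0)"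
proof
  fix t
  define x where "x = F p m (m - 1)"
  have "p \<noteq> 0" using p by auto
  have "(- p) ^ 2 dvd (- p) ^ nat p"
    using prime_ge_2_int[OF p] by (intro le_imp_power_dvd) simp
  then have d_mult: "(- p) ^ nat p = d * p ^ 2" by (simp add: d_def)
  have one: "m - (m - 1) = 1" using \<open>1 \<le> m\<close> by simp
  then have marks: "mark p m s x = (if s < m then 0 else - p)" if "s \<le> m" for s
    using that \<open>1 \<le> m\<close> mark_F[of "m - 1" m s p] by (auto simp: x_def)
  have "0 < nat p" using prime_gt_1_int[OF p] by simp
  consider "Suc t < m" | "Suc t = m" | "t = m" | "t = Suc m" | "t > Suc m" by linarith
  then show "jndR p (Suc m) m x t
    = (if t = Suc m then - p else if t = m then d * p + 1 else if Suc t = m then - d else 0)"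
  proof cases
    case 1
    then show ?thesis using marks \<open>0 < nat p\<close> by (simp add: jndR_below)
  next
    case 2
    then have "jndR p (Suc m) m x t = ((- d) * p ^ 2) div p ^ 2"
      using marks \<open>0 < nat p\<close> d_mult by (auto simp: jndR_below numeral_2_eq_2 power_0_left)
    also have "\<dots> = - d"
      using \<open>p \<noteq> 0\<close> by (intro nonzero_mult_div_cancel_right) simp
    finally show ?thesis using 2 by simp
  next
    case 3
    have "(- p) ^ nat p - - p = p * (d * p + 1)"
      using d_mult by (simp add: algebra_simps power2_eq_square)
    then show ?thesis using 3 \<open>1 \<le> m\<close> \<open>p \<noteq> 0\<close> by (simp add: jndR_def x_def F_def)
  next
    case 4
    then show ?thesis using \<open>1 \<le> m\<close> one by (simp add: jndR_def x_def F_def)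
  next
    case 5
    then show ?thesis by (simp add: jndR_def)
  qed
qed

lemma F_top_mem_Sop:
  assumes p: "prime p" and "1 \<le> m" and "F p m (m - 1) \<in> I"
  shows "F p (Suc m) m \<in> Sop p (Suc m) I"
proof -
  define d where "d = (- p) ^ nat p div p ^ 2"
  have "m - (m - 1) = 1" "Suc m - m = 1" using \<open>1 \<le> m\<close> by simp_all
  then have "F p (Suc m) m
      = addR (jndR p (Suc m) m (F p m (m - 1))) (\<lambda>t. d * indR (Suc m) m (F p m (m - 1)) t)"
    unfolding addR_def jndR_F_pred[OF p \<open>1 \<le> m\<close>] d_def[symmetric]
    using \<open>1 \<le> m\<close> by (auto simp: fun_eq_iff indR_def F_def algebra_simps)
  also have "\<dots> \<in> Sop p (Suc m) I"
    using assms(3) by (intro is_idealR_addR[OF is_idealR_Sop] is_idealR_smult[OF is_idealR_Sop]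
        jndR_mem_Sop indR_mem_Sop)
  finally show ?thesis .
qed

lemma F_mem_Sop:
  assumes "i < m" and "F p m i \<in> I" and "F p (Suc m) m \<in> Sop p (Suc m) I"
  shows "F p (Suc m) i \<in> Sop p (Suc m) I"
proof -
  have "p ^ (m - i) * p = p ^ (Suc m - i)"
    using assms(1) by (simp add: Suc_diff_le mult.commute)
  then have "F p (Suc m) i = addR (indR (Suc m) m (F p m i)) (\<lambda>t. p ^ (m - i) * F p (Suc m) m t)"
    using assms(1) by (auto simp: addR_def indR_def F_def)
  also have "\<dots> \<in> Sop p (Suc m) I"
    using assms(2,3)
    by (intro is_idealR_addR[OF is_idealR_Sop] is_idealR_smult[OF is_idealR_Sop] indR_mem_Sop)
  finally show ?thesis .
qed

lemma Sop_mark_ideal_self: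
  assumes p: "prime p" and "coprime q p"
  shows "Sop p (Suc m) (mark_ideal p m m q) = mark_ideal p (Suc m) (Suc m) q"
proof
  show "Sop p (Suc m) (mark_ideal p m m q) \<subseteq> mark_ideal p (Suc m) (Suc m) q"
    using Sop_mark_ideal_subset[OF p, of m m q] by simp
  have "constR (Suc m) q \<in> Sop p (Suc m) (mark_ideal p m m q)"
    using assms constR_mem_mark_ideal by (intro constR_mem_Sop) auto
  then have "J p (Suc m) (Suc m) q \<subseteq> Sop p (Suc m) (mark_ideal p m m q)"
    unfolding J_self by (intro ideal_gen_least is_idealR_Sop) simp
  then show "mark_ideal p (Suc m) (Suc m) q \<subseteq> Sop p (Suc m) (mark_ideal p m m q)"
    using J_eq_mark_ideal[OF assms(2)] by simp
qed

lemma Sop_mark_ideal: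
  assumes p: "prime p" and "coprime q p" and "k < m"
  shows "Sop p (Suc m) (mark_ideal p m k q) = mark_ideal p (Suc m) k q"
proof
  let ?S = "Sop p (Suc m) (mark_ideal p m k q)"
  show "?S \<subseteq> mark_ideal p (Suc m) k q"
    using Sop_mark_ideal_subset[OF p, of k m q] \<open>k < m\<close> by simp
  have F_top: "F p (Suc m) m \<in> ?S"
    using \<open>k < m\<close> by (intro F_top_mem_Sop[OF p] F_mem_mark_ideal) auto
  have "F p (Suc m) i \<in> ?S" if "k \<le> i" "i < Suc m" for i
  proof (cases "i = m")
    case False
    then show ?thesis using that by (intro F_mem_Sop[OF _ _ F_top] F_mem_mark_ideal) auto
  qed (use F_top in simp)
  moreover have "constR (Suc m) q \<in> ?S"
    using assms constR_mem_mark_ideal by (intro constR_mem_Sop) auto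
  ultimately have "J p (Suc m) k q \<subseteq> ?S"
    unfolding J_def by (intro ideal_gen_least is_idealR_Sop) auto
  then show "mark_ideal p (Suc m) k q \<subseteq> ?S"
    using J_eq_mark_ideal[OF assms(2)] \<open>k < m\<close> by simp
qed

lemma qZ_eq_mark_ideal: "qZ q = mark_ideal p 0 0 q"
proof
  show "qZ q \<subseteq> mark_ideal p 0 0 q"
    by (auto simp: qZ_def mark_ideal_def constR_carrierR mark_constR)
  show "mark_ideal p 0 0 q \<subseteq> qZ q"
  proof
    fix y assume "y \<in> mark_ideal p 0 0 q"
    then have "y \<in> carrierR 0" "q dvd y 0" by (auto simp: mark_ideal_def mark_self)
    then have "y = constR 0 (q * (y 0 div q))"
      by (auto simp: fun_eq_iff constR_def carrierR_def)
    then show "y \<in> qZ q" by (auto simp: qZ_def)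
  qed
qed

lemma Sit_eq_mark_ideal:
  assumes "prime p" and "coprime q p"
  shows "Sit p q k = mark_ideal p k k q"
  by (induction k) (simp_all add: qZ_eq_mark_ideal Sop_mark_ideal_self[OF assms])

theorem proposition6:
  fixes p q :: int and r :: nat
  assumes "prime p" and "prime q" and "q \<noteq> p"
  shows "(\<forall>k\<le>r. Sit p q k = ideal_gen p k {constR k q})
       \<and> (\<forall>l k. 1 \<le> l \<and> l \<le> r \<and> k \<le> l \<longrightarrow> Lit p k (l - k) (Sit p q k) = J p l k q)
       \<and> (\<forall>l k. 1 \<le> l \<and> l \<le> r \<and> k + 2 \<le> l \<longrightarrow>
             Sop p l (Lit p k (l - k - 1) (Sit p q k)) = Lit p k (l - k) (Sit p q k))"
proof -
  have coprime: "coprime q p" using assms by (simp add: primes_coprime)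
  have L_S: "Lit p k n (Sit p q k) = mark_ideal p (k + n) k q" for k n
    by (simp add: Sit_eq_mark_ideal[OF assms(1) coprime] Lit_mark_ideal)
  have "Sit p q k = ideal_gen p k {constR k q}" for k
    using Sit_eq_mark_ideal[OF assms(1) coprime] J_eq_mark_ideal[OF coprime, of k k]
    by (simp add: J_self)
  moreover have "Lit p k (l - k) (Sit p q k) = J p l k q" if "k \<le> l" for k l
    using that by (simp add: L_S J_eq_mark_ideal[OF coprime])
  moreover have "Sop p l (Lit p k (l - k - 1) (Sit p q k)) = Lit p k (l - k) (Sit p q k)"
    if "k + 2 \<le> l" for k l
  proof -
    define m where "m = l - 1"
    have "l = Suc m" "k < m" "l - k - 1 = m - k" "l - k = Suc m - k"
      using that by (auto simp: m_def)
    then show ?thesis by (simp add: L_S Sop_mark_ideal[OF assms(1) coprime])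
  qed
  ultimately show ?thesis by blast
qed

end
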